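(* Let $\mathbf{B} \equiv \lambda xyz.\, x(yz)$, $\mathbf{S} \equiv \lambda xyz.\, xz(yz)$, and let $Y_0 \equiv \lambda f.\, \omega_f\omega_f$ with $\omega_f \equiv \lambda x.\, f(xx)$ (Curry's fixed point combinator). Then $\mathbf{B}Y_0 \neq_\beta \mathbf{B}Y_0\mathbf{S}$.
   Context: Terms of the untyped $\lambda$-calculus modulo $\alpha$-conversion; $=_\beta$ is $\beta$-convertibility; application associates to the left. *)

theory Defs
  imports Main
begin

datatype dB =
    Var nat
  | App dB dB
  | Abs dB

primrec lift :: "dB \<Rightarrow> nat \<Rightarrow> dB" where
  "lift (Var i) k = (if i < k then Var i else Var (i + 1))"
| "lift (App s t) k = App (lift s k) (lift t k)"
| "lift (Abs s) k = Abs (lift s (k + 1))"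

primrec subst :: "dB \<Rightarrow> dB \<Rightarrow> nat \<Rightarrow> dB" where
  "subst (Var i) s k =
     (if k < i then Var (i - 1) else if i = k then s else Var i)"
| "subst (App t u) s k = App (subst t s k) (subst u s k)"
| "subst (Abs t) s k = Abs (subst t (lift s 0) (k + 1))"

inductive beta :: "dB \<Rightarrow> dB \<Rightarrow> bool" where
  beta: "beta (App (Abs s) t) (subst s t 0)"
| appL: "beta s t \<Longrightarrow> beta (App s u) (App t u)"
| appR: "beta s t \<Longrightarrow> beta (App u s) (App u t)"
| abs:  "beta s t \<Longrightarrow> beta (Abs s) (Abs t)"

inductive beta_conv :: "dB \<Rightarrow> dB \<Rightarrow> bool" where
  refl: "beta_conv t t"
| step: "beta s t \<Longrightarrow> beta_conv s t"
| sym:  "beta_conv s t \<Longrightarrow> beta_conv t s"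
| trans: "beta_conv s t \<Longrightarrow> beta_conv t u \<Longrightarrow> beta_conv s u"

definition combB :: dB where
  "combB = Abs (Abs (Abs (App (Var 2) (App (Var 1) (Var 0)))))"

definition combS :: dB where
  "combS = Abs (Abs (Abs (App (App (Var 2) (Var 0)) (App (Var 1) (Var 0)))))"

text \<open>Curry's Y0 = \<lambda>f. omega_f omega_f, omega_f = \<lambda>x. f(xx); inside the binder of f.\<close>
definition omega_f :: dB where
  "omega_f = Abs (App (Var 1) (App (Var 0) (Var 0)))"

definition Y0 :: dB where
  "Y0 = Abs (App omega_f omega_f)"

end

theory Submission
  imports Defs "HOL-Library.Confluence"
begin

text \<open>By Church--Rosser it suffices to show that B Y0 and B Y0 S have no common reduct.
A reduct of B Y is either B Y' or \<open>\<lambda>y z. t\<close> where z occurs in t only inside the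
application y z. A reduct of B Y0 S that is a double abstraction comes from \<open>\<lambda>z. Y0 (S z)\<close>,
and its body has the shape \<open>z w (z w (\<dots> (c w)))\<close> with c not a variable: there w occurs
as the argument of something other than z.\<close>

section \<open>Confluence of beta reduction\<close>

lemma lift_lift: "i < k + 1 \<Longrightarrow> lift (lift t i) (Suc k) = lift (lift t k) i"
  by (induct t arbitrary: i k) auto

lemma lift_subst [simp]:
  "j < i + 1 \<Longrightarrow> lift (subst t s j) i = subst (lift t (i + 1)) (lift s i) j"
  by (induct t arbitrary: i j s) (simp_all add: diff_Suc lift_lift split: nat.split)

lemma lift_subst_lt:
  "i < j + 1 \<Longrightarrow> lift (subst t s j) i = subst (lift t i) (lift s i) (j + 1)"
  by (induct t arbitrary: i j s) (auto simp: lift_lift)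

lemma subst_lift [simp]: "subst (lift t k) s k = t"
  by (induct t arbitrary: k s) simp_all

lemma subst_subst:
  "i < j + 1 \<Longrightarrow> subst (subst t (lift v i) (Suc j)) (subst u v j) i = subst (subst t u i) v j"
  by (induct t arbitrary: i j u v)
    (simp_all add: diff_Suc lift_lift [symmetric] lift_subst_lt split: nat.split)

inductive_cases beta_VarE: "beta (Var i) t"
inductive_cases beta_AbsE: "beta (Abs s) t"
inductive_cases beta_AppE [consumes 1, case_names beta appL appR]: "beta (App s u) t"

lemma rtranclp_beta_Abs: "beta\<^sup>*\<^sup>* s t \<Longrightarrow> beta\<^sup>*\<^sup>* (Abs s) (Abs t)"
  by (induct rule: rtranclp_induct) (auto intro: rtranclp.rtrancl_into_rtrancl beta.abs)

lemma rtranclp_beta_AppL: "beta\<^sup>*\<^sup>* s t \<Longrightarrow> beta\<^sup>*\<^sup>* (App s u) (App t u)"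
  by (induct rule: rtranclp_induct) (auto intro: rtranclp.rtrancl_into_rtrancl beta.appL)

lemma rtranclp_beta_AppR: "beta\<^sup>*\<^sup>* s t \<Longrightarrow> beta\<^sup>*\<^sup>* (App u s) (App u t)"
  by (induct rule: rtranclp_induct) (auto intro: rtranclp.rtrancl_into_rtrancl beta.appR)

inductive par_beta :: "dB \<Rightarrow> dB \<Rightarrow> bool" where
  var: "par_beta (Var n) (Var n)"
| abs: "par_beta s t \<Longrightarrow> par_beta (Abs s) (Abs t)"
| app: "par_beta s s' \<Longrightarrow> par_beta t t' \<Longrightarrow> par_beta (App s t) (App s' t')"
| beta: "par_beta s s' \<Longrightarrow> par_beta t t' \<Longrightarrow> par_beta (App (Abs s) t) (subst s' t' 0)"

inductive_cases par_beta_VarE: "par_beta (Var n) t"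
inductive_cases par_beta_AbsE: "par_beta (Abs s) t"
inductive_cases par_beta_AppE [consumes 1, case_names congr redex]: "par_beta (App s t) u"

lemma par_beta_refl: "par_beta t t"
  by (induct t) (auto intro: par_beta.intros)

lemma par_beta_lift: "par_beta t t' \<Longrightarrow> par_beta (lift t n) (lift t' n)"
  by (induct arbitrary: n rule: par_beta.induct) (auto intro: par_beta.intros)

lemma par_beta_subst:
  "par_beta t t' \<Longrightarrow> par_beta s s' \<Longrightarrow> par_beta (subst t s n) (subst t' s' n)"
proof (induct arbitrary: s s' n rule: par_beta.induct)
  case (beta t t' u u')
  have "par_beta (App (Abs (subst t (lift s 0) (Suc n))) (subst u s n))
          (subst (subst t' (lift s' 0) (Suc n)) (subst u' s' n) 0)"
    using beta by (auto intro!: par_beta.beta par_beta_lift)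
  then show ?case by (simp add: subst_subst)
qed (simp_all add: par_beta.intros par_beta_lift)

lemma par_beta_diamond: "par_beta t u \<Longrightarrow> par_beta t v \<Longrightarrow> \<exists>w. par_beta u w \<and> par_beta v w"
proof (induct arbitrary: v rule: par_beta.induct)
  case (var n)
  then show ?case by (auto elim: par_beta_VarE intro: par_beta.intros)
next
  case (abs s t)
  then show ?case by (auto elim!: par_beta_AbsE intro: par_beta.intros)
next
  case (app s s' t t')
  from app.prems show ?case
  proof (cases rule: par_beta_AppE)
    case (congr s2 t2)
    then show ?thesis using app.hyps by (meson par_beta.app)
  next
    case (redex s0 s2 t2)
    from app(1) \<open>s = Abs s0\<close> obtain s1 where s1: "s' = Abs s1" "par_beta s0 s1"
      by (auto elim: par_beta_AbsE)
    from app(2)[of "Abs s2"] redex obtain w1 where "par_beta s' w1" "par_beta (Abs s2) w1"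
      by (auto intro: par_beta.intros)
    with s1 obtain w1' where "w1 = Abs w1'" "par_beta s1 w1'" "par_beta s2 w1'"
      by (auto elim!: par_beta_AbsE)
    moreover from app(4)[of t2] redex obtain w2 where "par_beta t' w2" "par_beta t2 w2" by auto
    ultimately show ?thesis using redex s1 by (auto intro!: par_beta.beta par_beta_subst)
  qed
next
  case (beta s s' t t')
  from beta.prems show ?case
  proof (cases rule: par_beta_AppE)
    case (congr s2 t2)
    then obtain s3 where s3: "s2 = Abs s3" "par_beta s s3" by (auto elim: par_beta_AbsE)
    from beta(2)[of s3] s3 obtain w1 where "par_beta s' w1" "par_beta s3 w1" by auto
    moreover from beta(4)[of t2] congr obtain w2 where "par_beta t' w2" "par_beta t2 w2" by auto
    ultimately show ?thesis using congr s3 by (auto intro!: par_beta.beta par_beta_subst)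
  next
    case (redex s0 s2 t2)
    from beta(2)[of s2] redex obtain w1 where "par_beta s' w1" "par_beta s2 w1" by auto
    moreover from beta(4)[of t2] redex obtain w2 where "par_beta t' w2" "par_beta t2 w2" by auto
    ultimately show ?thesis using redex by (auto intro!: par_beta_subst)
  qed
qed

lemma beta_into_par_beta: "beta s t \<Longrightarrow> par_beta s t"
  by (induct rule: beta.induct) (auto intro: par_beta.intros par_beta_refl)

lemma par_beta_into_rtranclp_beta: "par_beta s t \<Longrightarrow> beta\<^sup>*\<^sup>* s t"
proof (induct rule: par_beta.induct)
  case (app s s' t t')
  then show ?case by (meson rtranclp_beta_AppL rtranclp_beta_AppR rtranclp_trans)
next
  case (beta s s' t t')
  then have "beta\<^sup>*\<^sup>* (App (Abs s) t) (App (Abs s') t')"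
    by (meson rtranclp_beta_Abs rtranclp_beta_AppL rtranclp_beta_AppR rtranclp_trans)
  then show ?case by (meson beta.beta rtranclp.rtrancl_into_rtrancl)
qed (simp_all add: rtranclp_beta_Abs)

lemma rtranclp_par_beta_eq_rtranclp_beta: "par_beta\<^sup>*\<^sup>* = beta\<^sup>*\<^sup>*"
proof (intro antisym predicate2I)
  show "beta\<^sup>*\<^sup>* s t" if "par_beta\<^sup>*\<^sup>* s t" for s t
    using that by (induct rule: rtranclp_induct) (auto intro: rtranclp_trans par_beta_into_rtranclp_beta)
  show "par_beta\<^sup>*\<^sup>* s t" if "beta\<^sup>*\<^sup>* s t" for s t
    using that by (induct rule: rtranclp_induct) (auto intro: rtranclp.rtrancl_into_rtrancl beta_into_par_beta)
qed

lemma confluentp_beta: "confluentp beta"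
proof -
  have "strong_confluentp par_beta"
  proof
    fix t u v
    assume "par_beta t u" and "par_beta t v"
    then obtain w where "par_beta u w" and "par_beta v w"
      using par_beta_diamond by blast
    then show "\<exists>w. par_beta\<^sup>*\<^sup>* u w \<and> par_beta\<^sup>=\<^sup>= v w" by auto
  qed
  then have "confluentp par_beta" by (rule strong_confluentp_imp_confluentp)
  then show ?thesis
    unfolding confluentp_def rtranclp_conversep rtranclp_par_beta_eq_rtranclp_beta .
qed

lemma beta_conv_imp_common_reduct: "beta_conv s t \<Longrightarrow> \<exists>u. beta\<^sup>*\<^sup>* s u \<and> beta\<^sup>*\<^sup>* t u"
proof (induct rule: beta_conv.induct)
  case (trans s t u)
  then obtain w1 w2 where "beta\<^sup>*\<^sup>* s w1" "beta\<^sup>*\<^sup>* t w1" "beta\<^sup>*\<^sup>* t w2" "beta\<^sup>*\<^sup>* u w2" by auto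
  moreover obtain w where "beta\<^sup>*\<^sup>* w1 w" "beta\<^sup>*\<^sup>* w2 w"
    using confluentpD[OF confluentp_beta] calculation(2,3) by blast
  ultimately show ?case by (meson rtranclp_trans)
qed auto

section \<open>Reducts of B Y\<close>

primrec free :: "dB \<Rightarrow> nat \<Rightarrow> bool" where
  "free (Var i) n = (i = n)"
| "free (App s t) n = (free s n \<or> free t n)"
| "free (Abs s) n = free s (Suc n)"

lemma not_free_lift: "\<not> free (lift t k) k"
  by (induct t arbitrary: k) auto

primrec only_as_arg_of :: "nat \<Rightarrow> nat \<Rightarrow> dB \<Rightarrow> bool" where
  "only_as_arg_of b a (Var i) = (i \<noteq> b)"
| "only_as_arg_of b a (App s t) =
     ((s = Var a \<and> t = Var b) \<or> (only_as_arg_of b a s \<and> only_as_arg_of b a t))"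
| "only_as_arg_of b a (Abs s) = only_as_arg_of (Suc b) (Suc a) s"

lemma only_as_arg_of_if_not_free: "\<not> free t b \<Longrightarrow> only_as_arg_of b a t"
  by (induct t arbitrary: a b) auto

definition lift_index :: "nat \<Rightarrow> nat \<Rightarrow> nat" where
  "lift_index i k = (if i < k then i else Suc i)"

lemma only_as_arg_of_lift:
  "only_as_arg_of b a t \<Longrightarrow> only_as_arg_of (lift_index b k) (lift_index a k) (lift t k)"
proof (induct t arbitrary: a b k)
  case (App s t)
  from App.prems consider "s = Var a" "t = Var b" | "only_as_arg_of b a s" "only_as_arg_of b a t"
    by auto
  then show ?case
  proof cases
    case 1
    then show ?thesis by (simp add: lift_index_def)
  next
    case 2
    then show ?thesis by (simp add: App.hyps)
  qed
next
  case (Abs s)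
  then have "only_as_arg_of (lift_index (Suc b) (Suc k)) (lift_index (Suc a) (Suc k)) (lift s (Suc k))"
    by simp
  then show ?case by (simp add: lift_index_def split: if_splits)
qed (auto simp: lift_index_def)

lemma only_as_arg_of_subst:
  "only_as_arg_of (Suc b) (Suc a) t \<Longrightarrow> j \<le> a \<Longrightarrow> j \<le> b \<Longrightarrow> only_as_arg_of b a s
    \<Longrightarrow> only_as_arg_of b a (subst t s j)"
proof (induct t arbitrary: a b j s)
  case (Abs t)
  have "only_as_arg_of (Suc b) (Suc a) (lift s 0)"
    using only_as_arg_of_lift[OF Abs(5), of 0] by (simp add: lift_index_def)
  with Abs show ?case by simp
qed auto

lemma only_as_arg_of_beta: "beta s t \<Longrightarrow> only_as_arg_of b a s \<Longrightarrow> only_as_arg_of b a t"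
proof (induct arbitrary: a b rule: beta.induct)
  case (beta s t)
  then show ?case by (auto intro: only_as_arg_of_subst)
qed (auto elim: beta_VarE)

lemma combB_normal: "\<not> beta combB t"
  by (auto simp: combB_def elim!: beta_AbsE beta_AppE beta_VarE)

lemma rtranclp_beta_combB_app:
  assumes "beta\<^sup>*\<^sup>* (App combB Y) u"
  shows "(\<exists>Y'. u = App combB Y') \<or> (\<exists>t. u = Abs (Abs t) \<and> only_as_arg_of 0 1 t)"
  using assms
proof (induct rule: rtranclp_induct)
  case (step u u')
  from step(3) show ?case
  proof (elim disjE exE conjE)
    fix Y' assume u: "u = App combB Y'"
    from step(2)[unfolded u] show ?case
    proof (cases rule: beta_AppE)
      case (beta s)
      then have "u' = Abs (Abs (App (lift (lift Y' 0) 0) (App (Var 1) (Var 0))))"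
        by (auto simp: combB_def)
      moreover have "only_as_arg_of 0 1 (lift (lift Y' 0) 0)"
        by (rule only_as_arg_of_if_not_free, rule not_free_lift)
      ultimately show ?thesis by simp
    qed (auto simp: combB_normal)
  next
    fix t assume "u = Abs (Abs t)" "only_as_arg_of 0 1 t"
    with step(2) show ?case by (auto elim!: beta_AbsE intro: only_as_arg_of_beta)
  qed
qed auto

section \<open>Reducts of B Y0 S\<close>

text \<open>B Y0 S reduces to \<open>(\<lambda>y z. Y0 (y z)) S\<close> and then to \<open>\<lambda>z. Y0 (S z)\<close>. In the
invariants below, \<open>k\<close> is the de Bruijn index of z (and \<open>k + 1\<close> that of y).
\<open>S_var_nf k\<close> and \<open>omega_S_nf k\<close> are the normal forms of \<open>S z\<close> and of \<open>\<omega>\<^sub>f\<close> with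
\<open>f := S z\<close>; \<open>omega_yz k\<close> is \<open>\<omega>\<^sub>f\<close> with \<open>f := y z\<close>.\<close>

definition S_var_nf :: "nat \<Rightarrow> dB" where
  "S_var_nf k = Abs (Abs (App (App (Var (Suc (Suc k))) (Var 0)) (App (Var 1) (Var 0))))"

definition omega_S_nf :: "nat \<Rightarrow> dB" where
  "omega_S_nf k = Abs (Abs (App (App (Var (Suc (Suc k))) (Var 0)) (App (App (Var 1) (Var 1)) (Var 0))))"

definition omega_yz :: "nat \<Rightarrow> dB" where
  "omega_yz k = Abs (App (App (Var (Suc (Suc k))) (Var (Suc k))) (App (Var 0) (Var 0)))"

lemma beta_normal_forms:
  shows "\<not> beta combS t" and "\<not> beta omega_f t"
    and "\<not> beta (S_var_nf k) t" and "\<not> beta (omega_S_nf k) t" and "\<not> beta (omega_yz k) t"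
  by (auto simp: combS_def omega_f_def S_var_nf_def omega_S_nf_def omega_yz_def
      elim!: beta_AbsE beta_AppE beta_VarE)

lemma lift_combS [simp]: "lift combS k = combS"
  by (simp add: combS_def)

lemma subst_combS [simp]: "subst combS s k = combS"
  by (simp add: combS_def)

lemma lift_omega_f [simp]: "lift omega_f (Suc k) = omega_f"
  by (simp add: omega_f_def)

lemma subst_omega_f [simp]: "subst omega_f s (Suc k) = omega_f"
  by (simp add: omega_f_def)

lemma subst_omega_f_0: "subst omega_f s 0 = Abs (App (lift s 0) (App (Var 0) (Var 0)))"
  by (simp add: omega_f_def)

inductive Y0_body_unfolding :: "dB \<Rightarrow> bool" where
  omega: "Y0_body_unfolding (App omega_f omega_f)"
| unfold: "Y0_body_unfolding t \<Longrightarrow> Y0_body_unfolding (App (Var 0) t)"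

lemma Y0_body_unfolding_lift: "Y0_body_unfolding t \<Longrightarrow> lift t (Suc k) = t"
  by (induct rule: Y0_body_unfolding.induct) auto

lemma Y0_body_unfolding_subst: "Y0_body_unfolding t \<Longrightarrow> subst t s (Suc k) = t"
  by (induct rule: Y0_body_unfolding.induct) auto

lemma Y0_body_unfolding_beta: "Y0_body_unfolding t \<Longrightarrow> beta t t' \<Longrightarrow> Y0_body_unfolding t'"
proof (induct arbitrary: t' rule: Y0_body_unfolding.induct)
  case omega
  then show ?case
  proof (cases rule: beta_AppE)
    case (beta s)
    then have "t' = App (Var 0) (App omega_f omega_f)"
      by (auto simp: omega_f_def)
    then show ?thesis by (simp add: Y0_body_unfolding.intros)
  qed (simp_all add: beta_normal_forms)
next
  case (unfold t)
  from unfold.prems show ?case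
    by (cases rule: beta_AppE) (auto elim: beta_VarE intro: Y0_body_unfolding.unfold unfold.hyps)
qed

definition S_var_reduct :: "nat \<Rightarrow> dB \<Rightarrow> bool" where
  "S_var_reduct k G \<longleftrightarrow> G = App combS (Var k) \<or> G = S_var_nf k"

definition omega_S_reduct :: "nat \<Rightarrow> dB \<Rightarrow> bool" where
  "omega_S_reduct k w \<longleftrightarrow>
     (\<exists>G. S_var_reduct (Suc k) G \<and> w = Abs (App G (App (Var 0) (Var 0)))) \<or> w = omega_S_nf k"

lemma S_var_reduct_lift: "S_var_reduct k G \<Longrightarrow> j \<le> k \<Longrightarrow> S_var_reduct (Suc k) (lift G j)"
  unfolding S_var_reduct_def S_var_nf_def by auto

lemma S_var_reduct_subst: "S_var_reduct (Suc k) G \<Longrightarrow> j \<le> k \<Longrightarrow> S_var_reduct k (subst G s j)"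
  unfolding S_var_reduct_def S_var_nf_def by auto

lemma omega_S_reduct_lift: "omega_S_reduct k w \<Longrightarrow> j \<le> k \<Longrightarrow> omega_S_reduct (Suc k) (lift w j)"
  unfolding omega_S_reduct_def omega_S_nf_def by (auto intro: S_var_reduct_lift)

lemma omega_S_reduct_subst: "omega_S_reduct (Suc k) w \<Longrightarrow> j \<le> k \<Longrightarrow> omega_S_reduct k (subst w s j)"
  unfolding omega_S_reduct_def omega_S_nf_def by (auto intro: S_var_reduct_subst)

lemma S_var_reduct_beta:
  assumes "S_var_reduct k G" and "beta G G'"
  shows "S_var_reduct k G'"
proof -
  from assms have "beta (App combS (Var k)) G'"
    by (auto simp: S_var_reduct_def beta_normal_forms)
  then show ?thesis
  proof (cases rule: beta_AppE)
    case (beta s)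
    then show ?thesis by (auto simp: S_var_reduct_def S_var_nf_def combS_def)
  qed (auto simp: beta_normal_forms elim: beta_VarE)
qed

lemma omega_S_reduct_beta:
  assumes "omega_S_reduct k w" and "beta w w'"
  shows "omega_S_reduct k w'"
proof -
  from assms obtain G where G: "S_var_reduct (Suc k) G"
    and "beta (Abs (App G (App (Var 0) (Var 0)))) w'"
    by (auto simp: omega_S_reduct_def beta_normal_forms)
  then obtain u where u: "beta (App G (App (Var 0) (Var 0))) u" and w': "w' = Abs u"
    by (auto elim: beta_AbsE)
  from u show ?thesis
  proof (cases rule: beta_AppE)
    case (beta g)
    with G have "G = S_var_nf (Suc k)"
      by (auto simp: S_var_reduct_def)
    with beta w' have "w' = omega_S_nf k"
      by (auto simp: S_var_nf_def omega_S_nf_def)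
    then show ?thesis by (simp add: omega_S_reduct_def)
  next
    case (appL G')
    then show ?thesis using G w' S_var_reduct_beta unfolding omega_S_reduct_def by blast
  qed (auto elim: beta_AppE beta_VarE)
qed

text \<open>An abstraction \<open>\<lambda>v. e\<close> among the reducts of \<open>Y0 (S z)\<close> has a body of the shape
\<open>z v (z v (\<dots> (c v)))\<close>, where \<open>c\<close> is again such a reduct.\<close>

inductive Y0S_reduct :: "nat \<Rightarrow> dB \<Rightarrow> bool" and Y0S_tail :: "nat \<Rightarrow> nat \<Rightarrow> dB \<Rightarrow> bool" where
  Y0_app: "Y0_body_unfolding t \<Longrightarrow> S_var_reduct k G \<Longrightarrow> Y0S_reduct k (App (Abs t) G)"
| omega_app: "omega_S_reduct k w \<Longrightarrow> omega_S_reduct k w' \<Longrightarrow> Y0S_reduct k (App w w')"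
| S_var_app: "S_var_reduct k G \<Longrightarrow> Y0S_reduct k c \<Longrightarrow> Y0S_reduct k (App G c)"
| abs: "Y0S_tail (Suc k) 0 e \<Longrightarrow> Y0S_reduct k (Abs e)"
| tail_app: "Y0S_reduct k c \<Longrightarrow> Y0S_tail k v (App c (Var v))"
| tail_cons: "Y0S_tail k v e \<Longrightarrow> Y0S_tail k v (App (App (Var k) (Var v)) e)"

lemma Y0S_reduct_not_Var: "Y0S_reduct k c \<Longrightarrow> c \<noteq> Var i"
  by (cases rule: Y0S_reduct.cases) auto

lemma Y0S_reduct_Y0S_tail_lift:
  shows "Y0S_reduct k c \<Longrightarrow> \<forall>j\<le>k. Y0S_reduct (Suc k) (lift c j)"
    and "Y0S_tail k v e \<Longrightarrow> \<forall>j. v < j \<and> j \<le> k \<longrightarrow> Y0S_tail (Suc k) v (lift e j)"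
  by (induct rule: Y0S_reduct_Y0S_tail.inducts)
    (auto simp: Y0_body_unfolding_lift
      intro: Y0S_reduct_Y0S_tail.intros S_var_reduct_lift omega_S_reduct_lift)

lemma Y0S_reduct_Y0S_tail_subst:
  shows "Y0S_reduct k' c \<Longrightarrow> \<forall>k j s. k' = Suc k \<and> j \<le> k \<longrightarrow> Y0S_reduct k (subst c s j)"
    and "Y0S_tail k' v e \<Longrightarrow> \<forall>k j s. k' = Suc k \<and> v < j \<and> j \<le> k \<longrightarrow> Y0S_tail k v (subst e s j)"
  by (induct rule: Y0S_reduct_Y0S_tail.inducts)
    (auto simp: Y0_body_unfolding_subst
      intro: Y0S_reduct_Y0S_tail.intros S_var_reduct_subst omega_S_reduct_subst)

lemma Y0S_tail_subst_Var: "Y0S_tail (Suc k) 0 e \<Longrightarrow> Y0S_tail k v (subst e (Var v) 0)"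
proof (induct e)
  case (App e1 e2)
  from App.prems show ?case
    by (cases rule: Y0S_tail.cases)
      (auto intro: Y0S_reduct_Y0S_tail.intros App.hyps Y0S_reduct_Y0S_tail_subst(1)[rule_format])
qed (auto elim: Y0S_tail.cases)

lemma Y0_body_unfolding_subst_S_var:
  "Y0_body_unfolding t \<Longrightarrow> S_var_reduct k G \<Longrightarrow> Y0S_reduct k (subst t G 0)"
proof (induct rule: Y0_body_unfolding.induct)
  case omega
  then have "omega_S_reduct k (subst omega_f G 0)"
    unfolding subst_omega_f_0 omega_S_reduct_def using S_var_reduct_lift by auto
  then show ?case by (simp add: Y0S_reduct_Y0S_tail.omega_app)
qed (simp add: Y0S_reduct_Y0S_tail.S_var_app)

lemma beta_Y0_app_Y0S_reduct:
  assumes "Y0_body_unfolding t" and "S_var_reduct k G" and "beta (App (Abs t) G) c"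
  shows "Y0S_reduct k c"
  using assms(3)
proof (cases rule: beta_AppE)
  case beta
  then show ?thesis using assms Y0_body_unfolding_subst_S_var by simp
next
  case appL
  then show ?thesis using assms
    by (auto elim!: beta_AbsE intro: Y0S_reduct_Y0S_tail.Y0_app Y0_body_unfolding_beta)
next
  case appR
  then show ?thesis using assms by (auto intro: Y0S_reduct_Y0S_tail.Y0_app S_var_reduct_beta)
qed

lemma beta_omega_app_Y0S_reduct:
  assumes w: "omega_S_reduct k w" and w': "omega_S_reduct k w'" and "beta (App w w') c"
  shows "Y0S_reduct k c"
  using assms(3)
proof (cases rule: beta_AppE)
  case (beta s)
  show ?thesis
  proof (cases "w = omega_S_nf k")
    case True
    with beta have "c = Abs (App (App (Var (Suc k)) (Var 0)) (App (App (lift w' 0) (lift w' 0)) (Var 0)))"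
      by (auto simp: omega_S_nf_def)
    moreover have "omega_S_reduct (Suc k) (lift w' 0)"
      using omega_S_reduct_lift[OF w'] by simp
    ultimately show ?thesis by (simp add: Y0S_reduct_Y0S_tail.intros)
  next
    case False
    with w beta obtain G where "S_var_reduct (Suc k) G" and "c = App (subst G w' 0) (App w' w')"
      by (auto simp: omega_S_reduct_def)
    then show ?thesis using w' S_var_reduct_subst by (auto intro: Y0S_reduct_Y0S_tail.intros)
  qed
next
  case appL
  then show ?thesis using assms by (auto intro: Y0S_reduct_Y0S_tail.omega_app omega_S_reduct_beta)
next
  case appR
  then show ?thesis using assms by (auto intro: Y0S_reduct_Y0S_tail.omega_app omega_S_reduct_beta)
qed

lemma Y0S_reduct_Y0S_tail_beta:
  shows "Y0S_reduct k c \<Longrightarrow> beta c c' \<Longrightarrow> Y0S_reduct k c'"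
    and "Y0S_tail k v e \<Longrightarrow> beta e e' \<Longrightarrow> Y0S_tail k v e'"
proof (induct arbitrary: c' and e' rule: Y0S_reduct_Y0S_tail.inducts)
  case (Y0_app t k G)
  then show ?case by (rule beta_Y0_app_Y0S_reduct)
next
  case (omega_app k w w')
  then show ?case by (rule beta_omega_app_Y0S_reduct)
next
  case (S_var_app k G c)
  from S_var_app.prems show ?case
  proof (cases rule: beta_AppE)
    case (beta g)
    with S_var_app.hyps(1) have "c' = Abs (App (App (Var (Suc k)) (Var 0)) (App (lift c 0) (Var 0)))"
      by (auto simp: S_var_reduct_def S_var_nf_def)
    moreover have "Y0S_reduct (Suc k) (lift c 0)"
      using Y0S_reduct_Y0S_tail_lift(1)[OF S_var_app.hyps(2)] by simp
    ultimately show ?thesis by (simp add: Y0S_reduct_Y0S_tail.intros)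
  qed (auto intro: Y0S_reduct_Y0S_tail.S_var_app S_var_reduct_beta S_var_app.hyps)
next
  case (abs k e)
  then show ?case by (auto elim!: beta_AbsE intro: Y0S_reduct_Y0S_tail.abs)
next
  case (tail_app k c v)
  from tail_app.prems show ?case
  proof (cases rule: beta_AppE)
    case (beta s)
    with tail_app.hyps(1) have "Y0S_tail (Suc k) 0 s"
      by (auto elim: Y0S_reduct.cases)
    then show ?thesis using Y0S_tail_subst_Var beta by simp
  qed (auto elim: beta_VarE intro: Y0S_reduct_Y0S_tail.tail_app tail_app.hyps)
next
  case (tail_cons k v e)
  from tail_cons.prems show ?case
    by (cases rule: beta_AppE)
      (auto elim: beta_AppE beta_VarE intro: Y0S_reduct_Y0S_tail.tail_cons tail_cons.hyps)
qed

lemma Y0S_tail_not_only_as_arg_of: "Y0S_tail k v e \<Longrightarrow> \<not> only_as_arg_of v k e"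
proof (induct e)
  case (App e1 e2)
  from App.prems show ?case
    by (cases rule: Y0S_tail.cases) (auto dest: Y0S_reduct_not_Var App.hyps)
qed (auto elim: Y0S_tail.cases)

inductive Y0_yz_reduct :: "nat \<Rightarrow> dB \<Rightarrow> bool" where
  Y0_app: "Y0_body_unfolding t \<Longrightarrow> Y0_yz_reduct k (App (Abs t) (App (Var (Suc k)) (Var k)))"
| omega_app: "Y0_yz_reduct k (App (omega_yz k) (omega_yz k))"
| unfold: "Y0_yz_reduct k c \<Longrightarrow> Y0_yz_reduct k (App (App (Var (Suc k)) (Var k)) c)"

lemma Y0_yz_reduct_not_Abs: "Y0_yz_reduct k c \<Longrightarrow> c \<noteq> Abs s"
  by (cases rule: Y0_yz_reduct.cases) auto

lemma Y0_body_unfolding_subst_yz: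
  "Y0_body_unfolding t \<Longrightarrow> Y0_yz_reduct k (subst t (App (Var (Suc k)) (Var k)) 0)"
proof (induct rule: Y0_body_unfolding.induct)
  case omega
  have "subst omega_f (App (Var (Suc k)) (Var k)) 0 = omega_yz k"
    by (simp add: subst_omega_f_0 omega_yz_def)
  then show ?case by (simp add: Y0_yz_reduct.omega_app)
qed (simp add: Y0_yz_reduct.unfold)

lemma Y0_yz_reduct_beta: "Y0_yz_reduct k c \<Longrightarrow> beta c c' \<Longrightarrow> Y0_yz_reduct k c'"
proof (induct arbitrary: c' rule: Y0_yz_reduct.induct)
  case (Y0_app t k)
  from Y0_app.prems show ?case
  proof (cases rule: beta_AppE)
    case beta
    then show ?thesis using Y0_app.hyps Y0_body_unfolding_subst_yz by simp
  next
    case appL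
    then show ?thesis using Y0_app.hyps
      by (auto elim!: beta_AbsE intro: Y0_yz_reduct.Y0_app Y0_body_unfolding_beta)
  qed (auto elim: beta_AppE beta_VarE)
next
  case (omega_app k)
  from omega_app.prems show ?case
  proof (cases rule: beta_AppE)
    case (beta s)
    then have "c' = App (App (Var (Suc k)) (Var k)) (App (omega_yz k) (omega_yz k))"
      by (auto simp: omega_yz_def)
    then show ?thesis by (simp add: Y0_yz_reduct.intros)
  qed (simp_all add: beta_normal_forms)
next
  case (unfold k c)
  from unfold.prems show ?case
    by (cases rule: beta_AppE) (auto elim: beta_AppE beta_VarE intro: Y0_yz_reduct.unfold unfold.hyps)
qed

lemma Y0_yz_reduct_subst_S: "Y0_yz_reduct k c \<Longrightarrow> Y0S_reduct k (subst c combS (Suc k))"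
proof (induct rule: Y0_yz_reduct.induct)
  case (Y0_app t k)
  then show ?case
    by (simp add: Y0_body_unfolding_subst Y0S_reduct_Y0S_tail.Y0_app S_var_reduct_def)
next
  case (omega_app k)
  have "omega_S_reduct k (subst (omega_yz k) combS (Suc k))"
    by (auto simp: omega_yz_def omega_S_reduct_def S_var_reduct_def)
  then show ?case by (simp add: Y0S_reduct_Y0S_tail.omega_app)
next
  case (unfold k c)
  then show ?case by (simp add: Y0S_reduct_Y0S_tail.S_var_app S_var_reduct_def)
qed

inductive BY0S_reduct :: "dB \<Rightarrow> bool" where
  B_app: "Y0_body_unfolding t \<Longrightarrow> BY0S_reduct (App (App combB (Abs t)) combS)"
| redex: "Y0_yz_reduct 0 b \<Longrightarrow> BY0S_reduct (App (Abs (Abs b)) combS)"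
| abs: "Y0S_reduct 0 c \<Longrightarrow> BY0S_reduct (Abs c)"

lemma BY0S_reduct_beta: "BY0S_reduct u \<Longrightarrow> beta u u' \<Longrightarrow> BY0S_reduct u'"
proof (induct rule: BY0S_reduct.induct)
  case (B_app t)
  from B_app.prems show ?case
  proof (cases rule: beta_AppE)
    case (appL x)
    from appL(2) show ?thesis
    proof (cases rule: beta_AppE)
      case (beta s)
      then have "x = Abs (Abs (App (lift (lift (Abs t) 0) 0) (App (Var 1) (Var 0))))"
        by (auto simp: combB_def)
      also have "lift (lift (Abs t) 0) 0 = Abs t"
        using Y0_body_unfolding_lift[OF B_app.hyps] by simp
      finally show ?thesis
        using appL(1) B_app.hyps by (auto intro: BY0S_reduct.redex Y0_yz_reduct.Y0_app)
    next
      case appR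
      then show ?thesis using appL(1) B_app.hyps
        by (auto elim!: beta_AbsE intro: BY0S_reduct.B_app Y0_body_unfolding_beta)
    qed (simp add: combB_normal)
  qed (simp_all add: beta_normal_forms)
next
  case (redex b)
  from redex.prems show ?case
  proof (cases rule: beta_AppE)
    case beta
    then show ?thesis using Y0_yz_reduct_subst_S[OF redex.hyps] by (auto intro: BY0S_reduct.abs)
  next
    case appL
    then show ?thesis using redex.hyps
      by (auto elim!: beta_AbsE intro: BY0S_reduct.redex Y0_yz_reduct_beta)
  qed (simp add: beta_normal_forms)
next
  case (abs c)
  then show ?case
    by (auto elim!: beta_AbsE intro: BY0S_reduct.abs Y0S_reduct_Y0S_tail_beta(1))
qed

lemma rtranclp_beta_BY0S: "beta\<^sup>*\<^sup>* (App (App combB Y0) combS) u \<Longrightarrow> BY0S_reduct u"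
proof (induct rule: rtranclp_induct)
  case base
  show ?case unfolding Y0_def by (intro BY0S_reduct.B_app Y0_body_unfolding.omega)
qed (rule BY0S_reduct_beta)

lemma BY0S_reduct_not_combB_app: "BY0S_reduct u \<Longrightarrow> u \<noteq> App combB Y"
  by (auto elim!: BY0S_reduct.cases simp: combB_def dest: Y0_yz_reduct_not_Abs)

lemma BY0S_reduct_Abs_Abs: "BY0S_reduct (Abs (Abs t)) \<Longrightarrow> \<not> only_as_arg_of 0 1 t"
  by (auto elim!: BY0S_reduct.cases Y0S_reduct.cases dest: Y0S_tail_not_only_as_arg_of)

theorem proposition3p5:
  shows "\<not> beta_conv (App combB Y0) (App (App combB Y0) combS)"
proof
  assume "beta_conv (App combB Y0) (App (App combB Y0) combS)"
  then obtain u where BY0: "beta\<^sup>*\<^sup>* (App combB Y0) u"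
    and BY0S: "beta\<^sup>*\<^sup>* (App (App combB Y0) combS) u"
    using beta_conv_imp_common_reduct by blast
  from BY0S have "BY0S_reduct u" by (rule rtranclp_beta_BY0S)
  moreover from BY0
  have "(\<exists>Y. u = App combB Y) \<or> (\<exists>t. u = Abs (Abs t) \<and> only_as_arg_of 0 1 t)"
    by (rule rtranclp_beta_combB_app)
  ultimately show False
    using BY0S_reduct_not_combB_app BY0S_reduct_Abs_Abs by blast
qed

end
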